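(* Let $G=\bigl((f_j)_{j=1}^n;(\mu^{R})_{\emptyset\ne R\subseteq[n]}\bigr)$ be an $n$-resource selection game, and treat $\mathrm{undefined}$ as $-\infty$ in maxima. (a) $\max_{\emptyset\ne S\subseteq[n]}E_G(S)$ is a real number. (b) If $f_1,\ldots,f_n$ are continuous, then $h_G=\max_{\emptyset\ne S\subseteq[n]}E_G(S)$.
   Context: An $n$-resource selection game is $G=\bigl((f_j)_{j=1}^n;(\mu^{R})_{\emptyset\ne R\subseteq[n]}\bigr)$ with each $f_j:[0,\infty)\to\mathbb{R}$ nondecreasing and each $\mu^R\ge0$. Equalization: for nondecreasing $g_1,\ldots,g_m:[0,\infty)\to\mathbb{R}\cup\{\mathrm{undefined}\}$, $\mathrm{eq}(g_1,\ldots,g_m)(\mu)=g_1(\mu_1)$ if there exist $\mu_1,\ldots,\mu_m\ge0$ summing to $\mu$ with $g_1(\mu_1)=\cdots=g_m(\mu_m)\in\mathbb{R}$, else $\mathrm{undefined}$. For nonempty $S\subseteq[n]$: $E_G(S)=\mathrm{eq}(f_k:k\in S)\bigl(\sum_{\emptyset\ne R\subseteq S}\mu^R\bigr)$; $M_G(S)$ is the set of nonempty $S'\subseteq S$ such that for every $0\le\mu\le\sum_{R\subseteq S,\,R\cap S'\ne\emptyset}\mu^R$, $\mathrm{eq}(f_k:k\in S')(\mu)\ne E_G(S)$ ($\mathrm{undefined}$ differs from every real); $D_G=\{S: E_G(S)\in\mathbb{R},\ M_G(S)=\emptyset\}$; $h_G=\max_{S\in D_G}E_G(S)$. *)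

theory Defs
  imports "HOL-Analysis.Analysis"
begin

text \<open>A game with n resources: cost functions f j (j in {1..n}) and masses mu R
  for nonempty R subset of {1..n}.  'undefined' values are modelled by None.\<close>

definition rsg_game :: "nat \<Rightarrow> (nat \<Rightarrow> real \<Rightarrow> real) \<Rightarrow> (nat set \<Rightarrow> real) \<Rightarrow> bool" where
  "rsg_game n f mu \<longleftrightarrow>
     (\<forall>j\<in>{1..n}. mono_on {0..} (f j)) \<and>
     (\<forall>R. R \<noteq> {} \<longrightarrow> R \<subseteq> {1..n} \<longrightarrow> mu R \<ge> 0)"

definition eq_profile :: "(nat \<Rightarrow> real \<Rightarrow> real) \<Rightarrow> nat set \<Rightarrow> real \<Rightarrow> real \<Rightarrow> bool" where
  "eq_profile f S m c \<longleftrightarrow>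
     (\<exists>x. (\<forall>k\<in>S. x k \<ge> 0) \<and> (\<Sum>k\<in>S. x k) = m \<and> (\<forall>k\<in>S. f k (x k) = c))"

definition eqz :: "(nat \<Rightarrow> real \<Rightarrow> real) \<Rightarrow> nat set \<Rightarrow> real \<Rightarrow> real option" where
  "eqz f S m = (if \<exists>c. eq_profile f S m c then Some (THE c. eq_profile f S m c) else None)"

definition E_G :: "(nat \<Rightarrow> real \<Rightarrow> real) \<Rightarrow> (nat set \<Rightarrow> real) \<Rightarrow> nat set \<Rightarrow> real option" where
  "E_G f mu S = eqz f S (\<Sum>R\<in>{R. R \<noteq> {} \<and> R \<subseteq> S}. mu R)"

definition M_G :: "(nat \<Rightarrow> real \<Rightarrow> real) \<Rightarrow> (nat set \<Rightarrow> real) \<Rightarrow> nat set \<Rightarrow> nat set set" where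
  "M_G f mu S = {S'. S' \<noteq> {} \<and> S' \<subseteq> S \<and>
     (\<forall>m. 0 \<le> m \<and> m \<le> (\<Sum>R\<in>{R. R \<subseteq> S \<and> R \<inter> S' \<noteq> {}}. mu R)
          \<longrightarrow> eqz f S' m \<noteq> E_G f mu S)}"

definition D_G :: "nat \<Rightarrow> (nat \<Rightarrow> real \<Rightarrow> real) \<Rightarrow> (nat set \<Rightarrow> real) \<Rightarrow> nat set set" where
  "D_G n f mu = {S. S \<noteq> {} \<and> S \<subseteq> {1..n} \<and> E_G f mu S \<noteq> None \<and> M_G f mu S = {}}"

definition ext_val :: "real option \<Rightarrow> ereal" where
  "ext_val v = (case v of None \<Rightarrow> -\<infinity> | Some c \<Rightarrow> ereal c)"

definition max_E :: "nat \<Rightarrow> (nat \<Rightarrow> real \<Rightarrow> real) \<Rightarrow> (nat set \<Rightarrow> real) \<Rightarrow> ereal" where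
  "max_E n f mu = Max ((\<lambda>S. ext_val (E_G f mu S)) ` {S. S \<noteq> {} \<and> S \<subseteq> {1..n}})"

definition h_G :: "nat \<Rightarrow> (nat \<Rightarrow> real \<Rightarrow> real) \<Rightarrow> (nat set \<Rightarrow> real) \<Rightarrow> ereal" where
  "h_G n f mu = Max ((\<lambda>S. ext_val (E_G f mu S)) ` D_G n f mu)"

end

theory Submission imports Defs begin

(* Part (a): the singleton {1} has the real value f 1 (mu {1}), no value is +\<infinity>,
   and the maximum is taken over a finite set, so max_E is a real number.
   Part (b): among the sets S attaining the maximum value r, pick one of minimal
   cardinality and an equalizing profile x of S.  If some S' \<subseteq> S violated the
   condition defining D_G, then the complement T = S - S' would carry more load than
   x gives it; by the raising lemma below T could then be equalized at a level
   \<ge> r, i.e. T would be a smaller maximizer.  Hence S \<in> D_G and h_G = max_E.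
   The analytic core is the raising lemma (eq_profile_raise): for continuous
   nondecreasing costs, an equalized profile of total \<le> m can be replaced by one
   of total exactly m at a level that is not lower.  It is proved by maximizing the
   minimal cost level over the compact simplex of distributions of mass m and
   showing that a maximizer can be equalized. *)

section \<open>Distributions of a mass and their minimal cost level\<close>

definition distributions :: "nat set \<Rightarrow> real \<Rightarrow> (nat \<Rightarrow> real) set" where
  "distributions T m = {y. (\<forall>k\<in>T. 0 \<le> y k) \<and> (\<Sum>k\<in>T. y k) = m}"

definition min_level :: "(nat \<Rightarrow> real \<Rightarrow> real) \<Rightarrow> nat set \<Rightarrow> (nat \<Rightarrow> real) \<Rightarrow> real" where
  "min_level f T y = Min ((\<lambda>k. f k (y k)) ` T)"

lemma compact_box:
  fixes S :: "nat \<Rightarrow> real set"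
  assumes "\<And>k. compact (S k)"
  shows "compact {y::nat\<Rightarrow>real. \<forall>k. y k \<in> S k}"
proof -
  have "{y::nat\<Rightarrow>real. \<forall>k. y k \<in> S k} = PiE UNIV S" by (auto simp: PiE_def extensional_def)
  moreover have "compactin (product_topology (\<lambda>_. euclidean) UNIV) (PiE UNIV S)"
    using assms by (simp add: compactin_PiE)
  ultimately show ?thesis by (simp add: euclidean_product_topology)
qed

lemma continuous_on_Min_finite:
  fixes g :: "nat \<Rightarrow> 'a::topological_space \<Rightarrow> real"
  assumes "finite T" "T \<noteq> {}" "\<And>k. k \<in> T \<Longrightarrow> continuous_on K (g k)"
  shows "continuous_on K (\<lambda>y. Min ((\<lambda>k. g k y) ` T))"
  using assms
proof (induction T rule: finite_ne_induct)
  case (singleton x)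
  then show ?case by simp
next
  case (insert x F)
  have "(\<lambda>y. Min ((\<lambda>k. g k y) ` insert x F)) = (\<lambda>y. min (g x y) (Min ((\<lambda>k. g k y) ` F)))"
    using insert.hyps by auto
  then show ?case using insert by (auto intro!: continuous_on_min)
qed

lemma min_level_maximizer_exists:
  fixes f :: "nat \<Rightarrow> real \<Rightarrow> real"
  assumes fin: "finite T" and ne: "T \<noteq> {}" and m: "0 \<le> m"
    and cont: "\<forall>k\<in>T. continuous_on {0..} (f k)"
  shows "\<exists>ys\<in>distributions T m. \<forall>y\<in>distributions T m. min_level f T y \<le> min_level f T ys"
proof -
  define S where "S k = (if k \<in> T then {0..m} else {0::real})" for k
  define K where "K = {y::nat\<Rightarrow>real. \<forall>k. y k \<in> S k} \<inter> {y. (\<Sum>k\<in>T. y k) = m}"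
  have "continuous_on UNIV (\<lambda>y::nat\<Rightarrow>real. \<Sum>k\<in>T. y k)"
    by (intro continuous_intros) auto
  then have "closed {y::nat\<Rightarrow>real. (\<Sum>k\<in>T. y k) = m}"
    using continuous_closed_preimage_constant[OF _ closed_UNIV] by simp
  then have compact_K: "compact K"
    unfolding K_def by (intro compact_Int_closed compact_box) (auto simp: S_def)
  have K_distr: "K \<subseteq> distributions T m"
    by (auto simp: K_def S_def distributions_def split: if_splits)
  have "continuous_on K (min_level f T)" unfolding min_level_def
  proof (rule continuous_on_Min_finite[OF fin ne])
    fix k assume k: "k \<in> T"
    have "continuous_on K (\<lambda>y::nat\<Rightarrow>real. y k)"
      by (rule continuous_on_subset[OF continuous_on_product_coordinates]) simp
    moreover have "(\<lambda>y. y k) ` K \<subseteq> {0..}" using K_distr k by (auto simp: distributions_def)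
    ultimately show "continuous_on K (\<lambda>y. f k (y k))"
      using continuous_on_compose2[of "{0..}" "f k" K "\<lambda>y. y k"] cont k by auto
  qed
  have restrict_in_K: "(\<lambda>k. if k \<in> T then y k else 0) \<in> K"
    and restrict_level: "min_level f T (\<lambda>k. if k \<in> T then y k else 0) = min_level f T y"
    if y: "y \<in> distributions T m" for y
  proof -
    have "y k \<le> m" if "k \<in> T" for k
      using member_le_sum[OF that _ fin, of y] y by (auto simp: distributions_def)
    then show "(\<lambda>k. if k \<in> T then y k else 0) \<in> K"
      using y by (auto simp: K_def S_def distributions_def)
    show "min_level f T (\<lambda>k. if k \<in> T then y k else 0) = min_level f T y"
      unfolding min_level_def by (intro arg_cong[where f = Min] image_cong) auto
  qed
  obtain k0 where "k0 \<in> T" using ne by auto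
  then have "(\<lambda>k. if k = k0 then m else 0) \<in> distributions T m"
    using fin m by (auto simp: distributions_def)
  then have "K \<noteq> {}" using restrict_in_K by blast
  then obtain ys where "ys \<in> K" "\<forall>y\<in>K. min_level f T y \<le> min_level f T ys"
    using continuous_attains_sup[OF compact_K _ \<open>continuous_on K (min_level f T)\<close>] by blast
  then show ?thesis using K_distr restrict_in_K restrict_level by (metis subsetD)
qed

text \<open>Any nonnegative profile of total at most m can be enlarged pointwise to a
  distribution of m (put the slack on one resource).\<close>
lemma distribution_above:
  assumes fin: "finite T" and ne: "T \<noteq> {}"
    and x: "\<forall>k\<in>T. 0 \<le> x k" and sum_x: "(\<Sum>k\<in>T. x k) \<le> m"
  shows "\<exists>x'\<in>distributions T m. \<forall>k\<in>T. x k \<le> x' k"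
proof -
  obtain k0 where k0: "k0 \<in> T" using ne by auto
  define x' where "x' k = x k + (if k = k0 then m - (\<Sum>k\<in>T. x k) else 0)" for k
  have "(\<Sum>k\<in>T. x' k) = (\<Sum>k\<in>T. x k) + (m - (\<Sum>k\<in>T. x k))"
    by (simp add: x'_def sum.distrib fin k0)
  then have "x' \<in> distributions T m" using x sum_x by (auto simp: distributions_def x'_def)
  moreover have "\<forall>k\<in>T. x k \<le> x' k" using sum_x by (auto simp: x'_def)
  ultimately show ?thesis by blast
qed

lemma mono_level_between:
  fixes g :: "real \<Rightarrow> real"
  assumes "mono_on {0..} g" "0 \<le> a" "a \<le> z" "z \<le> b" "g a = v" "g b = v"
  shows "g z = v"
proof -
  have "0 \<le> z" "0 \<le> b" using assms(2-4) by linarith+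
  then have "g a \<le> g z" "g z \<le> g b" using mono_onD[OF assms(1)] assms(2-4) by auto
  then show ?thesis using assms(5,6) by auto
qed

lemma last_point_at_level:
  fixes g :: "real \<Rightarrow> real"
  assumes cont: "continuous_on {0..} g" and mono: "mono_on {0..} g"
    and a: "0 \<le> a" and m: "0 \<le> m" and ga: "g a = v"
  shows "\<exists>u. a \<le> u \<and> u \<le> a + m \<and> g u = v \<and> (\<forall>z. u < z \<and> z \<le> a + m \<longrightarrow> v < g z)"
proof -
  define A where "A = {z \<in> {a..a + m}. g z = v}"
  have "continuous_on {a..a + m} g" using continuous_on_subset[OF cont] a by auto
  then have "closed A" unfolding A_def by (rule continuous_closed_preimage_constant) auto
  moreover have "bounded A" by (rule bounded_subset[of "{a..a + m}"]) (auto simp: A_def)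
  ultimately have "compact A" by (simp add: compact_eq_bounded_closed)
  moreover have "a \<in> A" using ga m by (auto simp: A_def)
  ultimately obtain u where u: "u \<in> A" "\<forall>t\<in>A. t \<le> u" using compact_attains_sup by blast
  have "v < g z" if z: "u < z" "z \<le> a + m" for z
  proof -
    have "g u \<le> g z" using mono_onD[OF mono, of u z] u a z by (auto simp: A_def)
    moreover have "z \<notin> A" using u(2) z by force
    ultimately show ?thesis using u(1) z by (auto simp: A_def)
  qed
  then show ?thesis using u(1) by (auto simp: A_def)
qed

text \<open>A mass between the totals of two pointwise ordered profiles is the total
  of a profile in between (convex interpolation).\<close>
lemma interpolate_total:
  fixes w u :: "nat \<Rightarrow> real"
  assumes wu: "\<forall>k\<in>T. w k \<le> u k"
    and lower: "(\<Sum>k\<in>T. w k) \<le> m" and upper: "m \<le> (\<Sum>k\<in>T. u k)"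
  shows "\<exists>y. (\<forall>k\<in>T. w k \<le> y k \<and> y k \<le> u k) \<and> (\<Sum>k\<in>T. y k) = m"
proof (cases "(\<Sum>k\<in>T. u k) = (\<Sum>k\<in>T. w k)")
  case True
  then show ?thesis using wu lower upper by (intro exI[of _ w]) auto
next
  case False
  then have lt: "(\<Sum>k\<in>T. w k) < (\<Sum>k\<in>T. u k)" using sum_mono[of T w u] wu by force
  define t where "t = (m - (\<Sum>k\<in>T. w k)) / ((\<Sum>k\<in>T. u k) - (\<Sum>k\<in>T. w k))"
  have t: "0 \<le> t" "t \<le> 1" using lt lower upper by (auto simp: t_def field_simps)
  define y where "y k = w k + t * (u k - w k)" for k
  have "w k \<le> y k \<and> y k \<le> u k" if "k \<in> T" for k
    using t wu that mult_right_mono[of t 1 "u k - w k"] by (auto simp: y_def)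
  moreover have "(\<Sum>k\<in>T. y k) = (\<Sum>k\<in>T. w k) + t * ((\<Sum>k\<in>T. u k) - (\<Sum>k\<in>T. w k))"
    by (simp add: y_def sum.distrib sum_distrib_left sum_subtractf right_diff_distrib)
  then have "(\<Sum>k\<in>T. y k) = m" using lt by (simp add: t_def)
  ultimately show ?thesis by blast
qed

section \<open>Raising an equalized profile\<close>

text \<open>We take v as the maximal
  minimal level over distributions of m; each resource reaches level v at some
  first point w k and keeps it until a last point u k.  If m \<le> \<Sum> u then we
  interpolate; otherwise spreading the excess over all resources would push
  every cost above v, contradicting the maximality of v.\<close>
lemma eq_profile_raise:
  fixes f :: "nat \<Rightarrow> real \<Rightarrow> real"
  assumes fin: "finite T" and ne: "T \<noteq> {}"
    and cont: "\<forall>k\<in>T. continuous_on {0..} (f k)"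
    and mono: "\<forall>k\<in>T. mono_on {0..} (f k)"
    and x: "\<forall>k\<in>T. 0 \<le> x k \<and> f k (x k) = c"
    and sum_x: "(\<Sum>k\<in>T. x k) \<le> m"
  shows "\<exists>v\<ge>c. eq_profile f T m v"
proof -
  have m: "0 \<le> m" using sum_x x sum_nonneg[of T x] by auto
  obtain ys where ys: "ys \<in> distributions T m"
    and ys_max: "\<And>y. y \<in> distributions T m \<Longrightarrow> min_level f T y \<le> min_level f T ys"
    using min_level_maximizer_exists[OF fin ne m cont] by blast
  define v where "v = min_level f T ys"
  have ys_nonneg: "\<forall>k\<in>T. 0 \<le> ys k" and ys_sum: "(\<Sum>k\<in>T. ys k) = m"
    using ys by (auto simp: distributions_def)
  have ys_above: "v \<le> f k (ys k)" if "k \<in> T" for k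
    unfolding v_def min_level_def using fin that by (intro Min_le) auto
  have c_le_v: "c \<le> v"
  proof -
    obtain x' where x': "x' \<in> distributions T m" "\<forall>k\<in>T. x k \<le> x' k"
      using distribution_above[OF fin ne _ sum_x] x by blast
    have "c \<le> f k (x' k)" if "k \<in> T" for k
    proof -
      have "0 \<le> x k" "x k \<le> x' k" using x x'(2) that by auto
      then show ?thesis using mono_onD[of "{0..}" "f k" "x k" "x' k"] mono x that by auto
    qed
    then have "c \<le> min_level f T x'" unfolding min_level_def using fin ne by auto
    then show ?thesis using ys_max[OF x'(1)] by (simp add: v_def)
  qed
  have "\<forall>k\<in>T. \<exists>w. 0 \<le> w \<and> w \<le> ys k \<and> f k w = v"
  proof
    fix k assume k: "k \<in> T"
    have "f k 0 \<le> f k (x k)" using mono_onD[of "{0..}" "f k" 0 "x k"] mono x k by auto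
    then have "f k 0 \<le> v" using x k c_le_v by auto
    moreover have "continuous_on {0..ys k} (f k)" using cont k continuous_on_subset by fastforce
    ultimately show "\<exists>w. 0 \<le> w \<and> w \<le> ys k \<and> f k w = v"
      using IVT'[of "f k" 0 v "ys k"] ys_nonneg ys_above k by auto
  qed
  then obtain w where w: "\<forall>k\<in>T. 0 \<le> w k \<and> w k \<le> ys k \<and> f k (w k) = v" by metis
  have "\<forall>k\<in>T. \<exists>u. w k \<le> u \<and> u \<le> w k + m \<and> f k u = v \<and> (\<forall>z. u < z \<and> z \<le> w k + m \<longrightarrow> v < f k z)"
    using last_point_at_level[of "f k" "w k" m v for k] cont mono w m by blast
  then obtain u where u: "\<forall>k\<in>T. w k \<le> u k \<and> u k \<le> w k + m \<and> f k (u k) = v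
      \<and> (\<forall>z. u k < z \<and> z \<le> w k + m \<longrightarrow> v < f k z)"
    by metis
  have sum_w: "(\<Sum>k\<in>T. w k) \<le> m" using ys_sum w sum_mono[of T w ys] by auto
  show ?thesis
  proof (cases "m \<le> (\<Sum>k\<in>T. u k)")
    case True
    then obtain y where y: "\<forall>k\<in>T. w k \<le> y k \<and> y k \<le> u k" "(\<Sum>k\<in>T. y k) = m"
      using interpolate_total[of T w u m] u sum_w by auto
    have "\<forall>k\<in>T. 0 \<le> y k \<and> f k (y k) = v"
      using y(1) w u mono mono_level_between[of "f k" "w k" "y k" "u k" v for k] by force
    then show ?thesis using y(2) c_le_v unfolding eq_profile_def by blast
  next
    case False
    define d where "d = (m - (\<Sum>k\<in>T. u k)) / real (card T)"
    have card_T: "1 \<le> real (card T)" using fin ne by (simp add: Suc_le_eq card_gt_0_iff)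
    have d: "0 < d" "d \<le> m - (\<Sum>k\<in>T. u k)"
      using False card_T by (auto simp: d_def divide_le_eq mult_le_cancel_left1)
    define y where "y k = u k + d" for k
    have u_nonneg: "\<forall>k\<in>T. 0 \<le> u k" using u w by force
    have "y \<in> distributions T m"
      using u_nonneg d card_T by (auto simp: distributions_def y_def sum.distrib d_def)
    moreover have "v < f k (y k)" if k: "k \<in> T" for k
    proof -
      have "u k \<le> (\<Sum>k\<in>T. u k)" using member_le_sum[of k T u] u_nonneg k fin by auto
      then have "u k < y k" "y k \<le> w k + m" using d w k by (auto simp: y_def)
      then show ?thesis using u k by blast
    qed
    then have "v < min_level f T y" unfolding min_level_def using fin ne by auto
    ultimately show ?thesis using ys_max v_def by fastforce
  qed
qed

section \<open>Uniqueness of the equalization level\<close>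

text \<open>For nondecreasing costs a mass admits at most one equalization level: a
  strictly higher level would need strictly more mass on every resource.\<close>
lemma eq_profile_unique:
  assumes fin: "finite S" and ne: "S \<noteq> {}" and mono: "\<forall>k\<in>S. mono_on {0..} (f k)"
    and "eq_profile f S m c" "eq_profile f S m c'"
  shows "c = c'"
proof -
  have False if p: "eq_profile f S m a" and p': "eq_profile f S m b" and lt: "a < b" for a b
  proof -
    obtain x where x: "\<forall>k\<in>S. x k \<ge> 0" "(\<Sum>k\<in>S. x k) = m" "\<forall>k\<in>S. f k (x k) = a"
      using p by (auto simp: eq_profile_def)
    obtain x' where x': "\<forall>k\<in>S. x' k \<ge> 0" "(\<Sum>k\<in>S. x' k) = m" "\<forall>k\<in>S. f k (x' k) = b"
      using p' by (auto simp: eq_profile_def)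
    have "x k < x' k" if k: "k \<in> S" for k
    proof (rule ccontr)
      assume "\<not> x k < x' k"
      then have "f k (x' k) \<le> f k (x k)"
        using mono_onD[of "{0..}" "f k" "x' k" "x k"] mono x x' k by auto
      then show False using x x' k lt by auto
    qed
    then have "(\<Sum>k\<in>S. x k) < (\<Sum>k\<in>S. x' k)" using sum_strict_mono[OF fin ne] by blast
    then show False using x x' by simp
  qed
  then show ?thesis using assms(4,5) by (metis linorder_neqE_linordered_idom)
qed

lemma eqz_Some_iff:
  assumes fin: "finite S" and ne: "S \<noteq> {}" and mono: "\<forall>k\<in>S. mono_on {0..} (f k)"
  shows "eqz f S m = Some c \<longleftrightarrow> eq_profile f S m c"
proof -
  have unique: "\<exists>!c. eq_profile f S m c" if "eq_profile f S m c" for c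
    using that eq_profile_unique[OF fin ne mono] by blast
  show ?thesis
    using theI'[OF unique] the1_equality[OF unique] by (auto simp: eqz_def)
qed

lemma eqz_singleton:
  assumes "0 \<le> m"
  shows "eqz f {j} m = Some (f j m)"
proof -
  have "eq_profile f {j} m = (\<lambda>c. c = f j m)"
    by (rule ext) (use assms in \<open>auto simp: eq_profile_def\<close>)
  then show ?thesis by (simp add: eqz_def)
qed

definition resource_sets :: "nat \<Rightarrow> nat set set" where
  "resource_sets n = {S. S \<noteq> {} \<and> S \<subseteq> {1..n}}"

text \<open>The load of S: the total mass of players whose strategy set lies within S.\<close>
definition load :: "(nat set \<Rightarrow> real) \<Rightarrow> nat set \<Rightarrow> real" where
  "load mu S = (\<Sum>R\<in>{R. R \<noteq> {} \<and> R \<subseteq> S}. mu R)"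

lemma E_G_load: "E_G f mu S = eqz f S (load mu S)"
  by (simp add: E_G_def load_def)

lemma finite_resource_sets: "finite (resource_sets n)"
  by (rule finite_subset[of _ "Pow {1..n}"]) (auto simp: resource_sets_def)

lemma resource_set_finite: "S \<in> resource_sets n \<Longrightarrow> finite S"
  by (auto simp: resource_sets_def intro: finite_subset)

lemma eqz_Some_iff_game:
  assumes "rsg_game n f mu" "S \<in> resource_sets n"
  shows "eqz f S m = Some c \<longleftrightarrow> eq_profile f S m c"
proof -
  have "S \<noteq> {}" "\<forall>k\<in>S. mono_on {0..} (f k)"
    using assms by (auto simp: rsg_game_def resource_sets_def)
  then show ?thesis using eqz_Some_iff[OF resource_set_finite[OF assms(2)]] by simp
qed

lemma E_G_Some_iff:
  assumes "rsg_game n f mu" "S \<in> resource_sets n"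
  shows "E_G f mu S = Some c \<longleftrightarrow> eq_profile f S (load mu S) c"
  using eqz_Some_iff_game[OF assms] by (simp add: E_G_load)

lemma ext_val_eq_ereal: "ext_val v = ereal r \<longleftrightarrow> v = Some r"
  by (cases v) (auto simp: ext_val_def)

lemma max_E_attained:
  assumes "n \<ge> 1"
  shows "max_E n f mu \<in> (\<lambda>S. ext_val (E_G f mu S)) ` resource_sets n"
proof -
  have "{1} \<in> resource_sets n" using assms by (auto simp: resource_sets_def)
  then show ?thesis unfolding max_E_def resource_sets_def[symmetric]
    using finite_resource_sets by (intro Max_in) auto
qed

lemma max_E_upper: "S \<in> resource_sets n \<Longrightarrow> ext_val (E_G f mu S) \<le> max_E n f mu"
  unfolding max_E_def resource_sets_def[symmetric]
  using finite_resource_sets by (intro Max_ge) auto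

text \<open>Part (a): the maximal value is real.  It is attained and values are never
  +\<infinity>, and it is at least the real value of the singleton {1}.\<close>
lemma max_E_real:
  assumes "n \<ge> 1" and "rsg_game n f mu"
  shows "\<exists>r. max_E n f mu = ereal r"
proof -
  have single: "{1} \<in> resource_sets n" using assms(1) by (auto simp: resource_sets_def)
  have "{R. R \<noteq> {} \<and> R \<subseteq> {1::nat}} = {{1}}" by auto
  then have "load mu {1} = mu {1}" by (simp add: load_def)
  moreover have "0 \<le> mu {1}" using assms by (auto simp: rsg_game_def)
  ultimately have "E_G f mu {1} = Some (f 1 (mu {1}))" by (simp add: E_G_load eqz_singleton)
  then have "max_E n f mu \<noteq> -\<infinity>"
    using max_E_upper[OF single, of f mu] by (auto simp: ext_val_def)
  moreover obtain S where "max_E n f mu = ext_val (E_G f mu S)"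
    using max_E_attained[OF assms(1), of f mu] by blast
  then have "max_E n f mu \<noteq> \<infinity>" by (simp add: ext_val_def split: option.split)
  ultimately show ?thesis by (cases "max_E n f mu") auto
qed

lemma load_split:
  assumes "finite S" "S' \<subseteq> S"
  shows "load mu S = (\<Sum>R\<in>{R. R \<subseteq> S \<and> R \<inter> S' \<noteq> {}}. mu R) + load mu (S - S')"
proof -
  define B1 where "B1 = {R. R \<subseteq> S \<and> R \<inter> S' \<noteq> {}}"
  define B2 where "B2 = {R. R \<noteq> {} \<and> R \<subseteq> S - S'}"
  have "{R. R \<noteq> {} \<and> R \<subseteq> S} = B1 \<union> B2" "B1 \<inter> B2 = {}"
    using assms(2) by (auto simp: B1_def B2_def)
  moreover have "finite B1" "finite B2"
    using assms(1) by (auto simp: B1_def B2_def intro: finite_subset[of _ "Pow S"])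
  ultimately show ?thesis unfolding load_def B1_def[symmetric] B2_def[symmetric]
    by (simp add: sum.union_disjoint)
qed

section \<open>Minimal maximizers lie in D_G\<close>

text \<open>Let S be a maximizer of E_G with value r of minimal cardinality, equalized
  by x.  Then every proper subset T of S carries at most the mass x gives it:
  otherwise raising x on T would equalize T at a level \<ge> r, making T a
  smaller maximizer.\<close>
lemma minimal_maximizer_load_bound:
  assumes game: "rsg_game n f mu" and cont: "\<forall>j\<in>{1..n}. continuous_on {0..} (f j)"
    and S: "S \<in> resource_sets n"
    and max: "\<forall>T\<in>resource_sets n. ext_val (E_G f mu T) \<le> ereal r"
    and minimal: "\<forall>T\<in>resource_sets n. E_G f mu T = Some r \<longrightarrow> card S \<le> card T"
    and x: "\<forall>k\<in>S. 0 \<le> x k \<and> f k (x k) = r"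
    and T: "T \<subset> S"
  shows "load mu T \<le> (\<Sum>k\<in>T. x k)"
proof (rule ccontr)
  assume exceeds: "\<not> ?thesis"
  then have T_ne: "T \<noteq> {}" by (auto simp: load_def)
  then have T_res: "T \<in> resource_sets n" using S T by (auto simp: resource_sets_def)
  have T_fin: "finite T" using resource_set_finite[OF T_res] .
  have "\<forall>k\<in>T. continuous_on {0..} (f k) \<and> mono_on {0..} (f k)"
    using cont game T_res by (auto simp: rsg_game_def resource_sets_def)
  then obtain v where "r \<le> v" and v: "eq_profile f T (load mu T) v"
    using eq_profile_raise[OF T_fin T_ne, of f x r "load mu T"] x T exceeds by auto
  then have "E_G f mu T = Some v" using E_G_Some_iff[OF game T_res] by simp
  then have "v = r" using max T_res \<open>r \<le> v\<close> by (fastforce simp: ext_val_def)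
  then have "card S \<le> card T" using minimal T_res \<open>E_G f mu T = Some v\<close> by blast
  moreover have "card T < card S" using psubset_card_mono[OF resource_set_finite[OF S] T] .
  ultimately show False by simp
qed

text \<open>A minimal maximizer has no subset witnessing membership in M_G: the mass
  x puts on S' is an admissible mass equalized at the value of S.\<close>
lemma minimal_maximizer_in_D:
  assumes game: "rsg_game n f mu" and cont: "\<forall>j\<in>{1..n}. continuous_on {0..} (f j)"
    and S: "S \<in> resource_sets n" and ES: "E_G f mu S = Some r"
    and max: "\<forall>T\<in>resource_sets n. ext_val (E_G f mu T) \<le> ereal r"
    and minimal: "\<forall>T\<in>resource_sets n. E_G f mu T = Some r \<longrightarrow> card S \<le> card T"
  shows "S \<in> D_G n f mu"
proof -
  have S_fin: "finite S" using resource_set_finite[OF S] .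
  obtain x where x: "\<forall>k\<in>S. 0 \<le> x k" "(\<Sum>k\<in>S. x k) = load mu S" "\<forall>k\<in>S. f k (x k) = r"
    using ES E_G_Some_iff[OF game S] by (auto simp: eq_profile_def)
  have x_level: "\<forall>k\<in>S. 0 \<le> x k \<and> f k (x k) = r" using x(1,3) by blast
  have "S' \<notin> M_G f mu S" for S'
  proof
    assume "S' \<in> M_G f mu S"
    then have S': "S' \<noteq> {}" "S' \<subseteq> S"
      and bad: "\<And>m. 0 \<le> m \<Longrightarrow> m \<le> (\<Sum>R\<in>{R. R \<subseteq> S \<and> R \<inter> S' \<noteq> {}}. mu R)
                  \<Longrightarrow> eqz f S' m \<noteq> E_G f mu S"
      unfolding M_G_def by blast+
    define m where "m = (\<Sum>k\<in>S'. x k)"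
    have "(\<Sum>k\<in>S. x k) = m + (\<Sum>k\<in>S - S'. x k)"
      using S_fin S'(2) by (simp add: m_def sum.subset_diff)
    moreover have "load mu (S - S') \<le> (\<Sum>k\<in>S - S'. x k)"
      using minimal_maximizer_load_bound[OF game cont S max minimal x_level, of "S - S'"] S' by blast
    ultimately have m_le: "m \<le> (\<Sum>R\<in>{R. R \<subseteq> S \<and> R \<inter> S' \<noteq> {}}. mu R)"
      using load_split[OF S_fin S'(2), of mu] x(2) by linarith
    have m_nonneg: "0 \<le> m" unfolding m_def using x S' by (intro sum_nonneg) blast
    have S'_res: "S' \<in> resource_sets n" using S S' by (auto simp: resource_sets_def)
    have "\<forall>k\<in>S'. 0 \<le> x k \<and> f k (x k) = r" using x_level S'(2) by blast
    then have "eq_profile f S' m r" unfolding eq_profile_def m_def by blast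
    then have "eqz f S' m = E_G f mu S" using eqz_Some_iff_game[OF game S'_res] ES by simp
    then show False using bad[OF m_nonneg m_le] by contradiction
  qed
  then show ?thesis using S ES by (auto simp: D_G_def resource_sets_def)
qed

lemma h_G_eq_max_E:
  assumes "S \<in> D_G n f mu" "ext_val (E_G f mu S) = max_E n f mu"
  shows "h_G n f mu = max_E n f mu"
proof -
  have D_sub: "D_G n f mu \<subseteq> resource_sets n" by (auto simp: D_G_def resource_sets_def)
  then have "finite (D_G n f mu)" using finite_resource_sets finite_subset by blast
  moreover have "max_E n f mu \<in> (\<lambda>S. ext_val (E_G f mu S)) ` D_G n f mu"
    using assms by (metis image_eqI)
  ultimately have "max_E n f mu \<le> h_G n f mu" unfolding h_G_def by (rule Max_ge[OF finite_imageI])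
  moreover have "h_G n f mu \<le> max_E n f mu"
    unfolding h_G_def max_E_def resource_sets_def[symmetric]
    using D_sub assms(1) finite_resource_sets by (intro Max_mono) auto
  ultimately show ?thesis by simp
qed

theorem mainTheorem17:
  fixes n :: nat and f :: "nat \<Rightarrow> real \<Rightarrow> real" and mu :: "nat set \<Rightarrow> real"
  assumes "n \<ge> 1" and "rsg_game n f mu"
  shows "(\<exists>r::real. max_E n f mu = ereal r)
     \<and> ((\<forall>j\<in>{1..n}. continuous_on {0..} (f j))
          \<longrightarrow> D_G n f mu \<noteq> {} \<and> h_G n f mu = max_E n f mu)"
proof -
  obtain r where r: "max_E n f mu = ereal r" using max_E_real[OF assms] by blast
  have "D_G n f mu \<noteq> {} \<and> h_G n f mu = max_E n f mu"
    if cont: "\<forall>j\<in>{1..n}. continuous_on {0..} (f j)"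
  proof -
    have "ereal r \<in> (\<lambda>S. ext_val (E_G f mu S)) ` resource_sets n"
      using max_E_attained[OF assms(1), of f mu] r by simp
    then obtain S0 where "S0 \<in> resource_sets n" "ext_val (E_G f mu S0) = ereal r" by auto
    then have "\<exists>S\<in>resource_sets n. E_G f mu S = Some r" by (auto simp: ext_val_eq_ereal)
    then obtain S where S: "S \<in> resource_sets n" "E_G f mu S = Some r"
      and minimal: "\<forall>T\<in>resource_sets n. E_G f mu T = Some r \<longrightarrow> card S \<le> card T"
      using ex_has_least_nat[of "\<lambda>S. S \<in> resource_sets n \<and> E_G f mu S = Some r" _ card] by blast
    have "S \<in> D_G n f mu"
      using minimal_maximizer_in_D[OF assms(2) cont S _ minimal] max_E_upper r by metis
    moreover have "ext_val (E_G f mu S) = max_E n f mu" using S(2) r by (simp add: ext_val_def)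
    ultimately show ?thesis using h_G_eq_max_E by blast
  qed
  then show ?thesis using r by blast
qed

end
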